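(* Let $\mathbb{U}$ be the Urysohn space and let $\mathbf{A},\mathbf{B}\subset\mathbb{U}$ be finite. Then for every $p\in\mathrm{Iso}_{\mathbf{A}\cap\mathbf{B}}(\mathbb{U})$ and every finite $\mathbf{C}\subseteq\mathbb{U}$ there is $q\in\langle\mathrm{Iso}_{\mathbf{A}}(\mathbb{U}),\mathrm{Iso}_{\mathbf{B}}(\mathbb{U})\rangle$ such that $q(x)=p(x)$ for all $x\in\mathbf{C}$.
   Context: The Urysohn space $\mathbb{U}$ is the unique (up to isometry) complete separable metric space into which every finite metric space embeds isometrically and in which every isometry between finite subsets extends to an isometry of $\mathbb{U}$. For $\mathbf{D}\subseteq\mathbb{U}$, $\mathrm{Iso}_{\mathbf{D}}(\mathbb{U})$ is the subgroup of isometries of $\mathbb{U}$ fixing $\mathbf{D}$ pointwise; $\langle X,Y\rangle$ is the subgroup generated by $X\cup Y$. *)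

theory Defs
  imports "HOL-Analysis.Analysis"
begin

definition isometry :: "('a::metric_space \<Rightarrow> 'a) \<Rightarrow> bool" where
  "isometry f \<longleftrightarrow> bij f \<and> (\<forall>x y. dist (f x) (f y) = dist x y)"

definition Iso_fix :: "'a::metric_space set \<Rightarrow> ('a \<Rightarrow> 'a) set" where
  "Iso_fix D = {f. isometry f \<and> (\<forall>x\<in>D. f x = x)}"

inductive_set gen_group :: "('a \<Rightarrow> 'a) set \<Rightarrow> ('a \<Rightarrow> 'a) set" for S where
  gen_id: "id \<in> gen_group S"
| gen_in: "f \<in> S \<Longrightarrow> f \<in> gen_group S"
| gen_inv: "f \<in> S \<Longrightarrow> inv f \<in> gen_group S"
| gen_comp: "f \<in> gen_group S \<Longrightarrow> g \<in> gen_group S \<Longrightarrow> f \<circ> g \<in> gen_group S"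

text \<open>Finite metric spaces are
  represented (up to isometry) by metrics d on {0..<n}.\<close>
definition urysohn_space :: "'a::metric_space itself \<Rightarrow> bool" where
  "urysohn_space _ \<longleftrightarrow>
     complete (UNIV :: 'a set) \<and>
     separable_space (euclidean :: 'a topology) \<and>
     (\<forall>(n::nat) (d::nat \<Rightarrow> nat \<Rightarrow> real).
        (\<forall>i<n. \<forall>j<n. d i j \<ge> 0 \<and> (d i j = 0 \<longleftrightarrow> i = j) \<and> d i j = d j i) \<and>
        (\<forall>i<n. \<forall>j<n. \<forall>k<n. d i k \<le> d i j + d j k) \<longrightarrow>
        (\<exists>e :: nat \<Rightarrow> 'a. \<forall>i<n. \<forall>j<n. dist (e i) (e j) = d i j)) \<and>
     (\<forall>(F :: 'a set) (g :: 'a \<Rightarrow> 'a). finite F \<and> (\<forall>x\<in>F. \<forall>y\<in>F. dist (g x) (g y) = dist x y) \<longrightarrow>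
        (\<exists>h. isometry h \<and> (\<forall>x\<in>F. h x = g x)))"

end

theory Submission
  imports Defs
begin

text \<open>
  The idea is to bring every finite configuration into a normal form using only isometries
  fixing \<open>A\<close> or \<open>B\<close>: given points \<open>x c\<close>, alternately push them as far as possible from \<open>A \<union> B\<close>
  by an isometry fixing \<open>B\<close> and by one fixing \<open>A\<close>. Each round increases the distances by at least
  the separation \<open>\<delta>\<close> between \<open>A - B\<close> and \<open>B - A\<close>, until (after finitely many rounds) the distances
  to \<open>A \<union> B\<close> are the largest ones compatible with the distances to \<open>A \<inter> B\<close>, capped by a bound \<open>M\<close>:
  the capped Katetov extension \<open>katetov_ext M (A \<inter> B) (dist (x c))\<close>.
  Applied to \<open>C\<close> and to \<open>p(C)\<close>, which have the same distances to \<open>A \<inter> B\<close>, this gives \<open>q1, q2\<close> in the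
  generated group with \<open>q1(C)\<close> and \<open>q2(p(C))\<close> at the same distances to \<open>A \<union> B\<close>; homogeneity
  yields \<open>s\<close> fixing \<open>A\<close> with \<open>s \<circ> q1 = q2 \<circ> p\<close> on \<open>C\<close>, and \<open>q2\<inverse> \<circ> s \<circ> q1\<close> is the required map.
\<close>

section \<open>Isometries and the group they generate\<close>

lemma isometry_dist: "isometry f \<Longrightarrow> dist (f x) (f y) = dist x y"
  unfolding isometry_def by blast

lemma isometry_inv: "isometry f \<Longrightarrow> isometry (inv f)"
  unfolding isometry_def by (metis bij_betw_inv_into bij_inv_eq_iff)

lemma isometry_comp: "isometry f \<Longrightarrow> isometry g \<Longrightarrow> isometry (f \<circ> g)"
  unfolding isometry_def by (auto intro: bij_comp)

lemma Iso_fix_dist: "f \<in> Iso_fix D \<Longrightarrow> z \<in> D \<Longrightarrow> dist (f x) z = dist x z"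
  unfolding Iso_fix_def using isometry_dist by (metis (mono_tags, lifting) mem_Collect_eq)

lemma Iso_fix_antimono: "D \<subseteq> D' \<Longrightarrow> Iso_fix D' \<subseteq> Iso_fix D"
  unfolding Iso_fix_def by auto

lemma gen_group_bij:
  assumes "\<forall>g\<in>S. bij g" and "f \<in> gen_group S"
  shows "bij f"
  using assms(2)
proof induction
  case gen_id
  show ?case by (rule bij_id)
next
  case (gen_comp f g)
  then show ?case by (blast intro: bij_comp)
qed (use assms(1) in \<open>auto intro: bij_imp_bij_inv\<close>)

lemma gen_group_Iso_fix:
  assumes "S \<subseteq> Iso_fix D" and "f \<in> gen_group S"
  shows "f \<in> Iso_fix D"
  using assms(2)
proof induction
  case gen_id
  show ?case unfolding Iso_fix_def isometry_def by (simp add: bij_def inj_on_def)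
next
  case (gen_in f)
  then show ?case using assms(1) by blast
next
  case (gen_inv f)
  then have f: "isometry f" "\<forall>x\<in>D. f x = x" using assms(1) unfolding Iso_fix_def by auto
  then have "\<forall>x\<in>D. inv f x = x"
    unfolding isometry_def by (metis bij_is_inj inv_f_f)
  then show ?case using isometry_inv[OF f(1)] unfolding Iso_fix_def by simp
next
  case (gen_comp f g)
  then show ?case using isometry_comp[of f g, unfolded comp_def] unfolding Iso_fix_def by auto
qed

lemma gen_group_inv:
  assumes bij: "\<forall>g\<in>S. bij g" and "f \<in> gen_group S"
  shows "inv f \<in> gen_group S"
  using assms(2)
proof induction
  case gen_id
  then show ?case by (metis inv_id gen_group.gen_id)
next
  case (gen_in f)
  then show ?case by (rule gen_group.gen_inv)
next
  case (gen_inv f)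
  then show ?case using bij by (simp add: inv_inv_eq gen_group.gen_in)
next
  case (gen_comp f g)
  then have "bij f" "bij g" using gen_group_bij[OF bij] by blast+
  then have "inv (f \<circ> g) = inv g \<circ> inv f" by (rule o_inv_distrib)
  then show ?case using gen_comp.IH gen_group.gen_comp by metis
qed

lemma gen_group_Iso_fix_common:
  "q \<in> gen_group (Iso_fix A \<union> Iso_fix B) \<Longrightarrow> q \<in> Iso_fix (A \<inter> B)"
  using Iso_fix_antimono[of "A \<inter> B" A] Iso_fix_antimono[of "A \<inter> B" B]
  by (intro gen_group_Iso_fix[of "Iso_fix A \<union> Iso_fix B"]) auto

lemma gen_group_solve:
  assumes bij: "\<forall>g\<in>S. bij g" and "q1 \<in> gen_group S" and "q2 \<in> gen_group S" and "s \<in> S"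
    and s: "\<forall>c\<in>C. s (q1 c) = q2 (p c)"
  shows "\<exists>q\<in>gen_group S. \<forall>c\<in>C. q c = p c"
proof (intro bexI[of _ "inv q2 \<circ> s \<circ> q1"] ballI)
  show "inv q2 \<circ> s \<circ> q1 \<in> gen_group S"
    using gen_group_inv[OF bij \<open>q2 \<in> gen_group S\<close>] gen_group.gen_in[OF \<open>s \<in> S\<close>] \<open>q1 \<in> gen_group S\<close>
    by (intro gen_group.gen_comp)
  show "(inv q2 \<circ> s \<circ> q1) c = p c" if "c \<in> C" for c
    using s that gen_group_bij[OF bij \<open>q2 \<in> gen_group S\<close>] by (simp add: bij_is_inj)
qed

lemma urysohn_universal:
  assumes "urysohn_space TYPE('a::metric_space)"
    and "\<forall>i<n. \<forall>j<n. d i j \<ge> 0 \<and> (d i j = 0 \<longleftrightarrow> i = j) \<and> d i j = d j i"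
    and "\<forall>i<n. \<forall>j<n. \<forall>k<n. d i k \<le> d i j + d j k"
  shows "\<exists>e :: nat \<Rightarrow> 'a. \<forall>i<n. \<forall>j<n. dist (e i) (e j) = d i j"
  using assms unfolding urysohn_space_def by blast

lemma urysohn_homogeneous:
  fixes g :: "'a::metric_space \<Rightarrow> 'a"
  assumes "urysohn_space TYPE('a)" and "finite F"
    and "\<forall>x\<in>F. \<forall>y\<in>F. dist (g x) (g y) = dist x y"
  shows "\<exists>h. isometry h \<and> (\<forall>x\<in>F. h x = g x)"
  using assms unfolding urysohn_space_def by blast

lemma embed_finite_metric:
  fixes d :: "'b \<Rightarrow> 'b \<Rightarrow> real"
  assumes U: "urysohn_space TYPE('a::metric_space)" and "finite I"
    and nonneg: "\<And>i j. i \<in> I \<Longrightarrow> j \<in> I \<Longrightarrow> d i j \<ge> 0"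
    and zero: "\<And>i j. i \<in> I \<Longrightarrow> j \<in> I \<Longrightarrow> d i j = 0 \<longleftrightarrow> i = j"
    and sym: "\<And>i j. i \<in> I \<Longrightarrow> j \<in> I \<Longrightarrow> d i j = d j i"
    and tri: "\<And>i j k. i \<in> I \<Longrightarrow> j \<in> I \<Longrightarrow> k \<in> I \<Longrightarrow> d i k \<le> d i j + d j k"
  shows "\<exists>e :: 'b \<Rightarrow> 'a. \<forall>i\<in>I. \<forall>j\<in>I. dist (e i) (e j) = d i j"
proof -
  define n where "n = card I"
  obtain h where h: "bij_betw h {0..<n} I"
    using ex_bij_betw_nat_finite[OF \<open>finite I\<close>] n_def by blast
  have hI: "h u \<in> I" if "u < n" for u using h that bij_betwE by fastforce
  define d' where "d' u v = d (h u) (h v)" for u v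
  have "\<forall>i<n. \<forall>j<n. d' i j \<ge> 0 \<and> (d' i j = 0 \<longleftrightarrow> i = j) \<and> d' i j = d' j i"
  proof (intro allI impI conjI)
    fix i j assume ij: "i < n" "j < n"
    then have hij: "h i \<in> I" "h j \<in> I" using hI by auto
    show "d' i j \<ge> 0" "d' i j = d' j i" using nonneg[OF hij] sym[OF hij] d'_def by simp_all
    have "h i = h j \<longleftrightarrow> i = j"
      using h ij unfolding bij_betw_def inj_on_def by auto
    then show "d' i j = 0 \<longleftrightarrow> i = j" using zero[OF hij] d'_def by simp
  qed
  moreover have "\<forall>i<n. \<forall>j<n. \<forall>k<n. d' i k \<le> d' i j + d' j k"
    unfolding d'_def by (intro allI impI tri hI)
  ultimately have "\<exists>e' :: nat \<Rightarrow> 'a. \<forall>i<n. \<forall>j<n. dist (e' i) (e' j) = d' i j"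
    by (rule urysohn_universal[OF U])
  then obtain e' :: "nat \<Rightarrow> 'a" where e': "\<forall>i<n. \<forall>j<n. dist (e' i) (e' j) = d' i j" ..
  define g where "g = the_inv_into {0..<n} h"
  have g: "g i < n \<and> h (g i) = i" if "i \<in> I" for i
    using f_the_inv_into_f_bij_betw[OF h that] bij_betwE[OF bij_betw_the_inv_into[OF h]] that
    unfolding g_def by auto
  show ?thesis
  proof (intro exI ballI)
    fix i j assume "i \<in> I" "j \<in> I"
    then show "dist ((e' \<circ> g) i) ((e' \<circ> g) j) = d i j" using e' g d'_def by simp
  qed
qed

lemma pseudometric_representatives:
  fixes d :: "'b \<Rightarrow> 'b \<Rightarrow> real"
  assumes nonneg: "\<And>i j. i \<in> I \<Longrightarrow> j \<in> I \<Longrightarrow> d i j \<ge> 0"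
    and refl: "\<And>i. i \<in> I \<Longrightarrow> d i i = 0"
    and sym: "\<And>i j. i \<in> I \<Longrightarrow> j \<in> I \<Longrightarrow> d i j = d j i"
    and tri: "\<And>i j k. i \<in> I \<Longrightarrow> j \<in> I \<Longrightarrow> k \<in> I \<Longrightarrow> d i k \<le> d i j + d j k"
  shows "\<exists>rep. (\<forall>i\<in>I. rep i \<in> I \<and> d i (rep i) = 0) \<and>
                (\<forall>i\<in>I. \<forall>k\<in>I. d i k = 0 \<longrightarrow> rep i = rep k)"
proof -
  define rep where "rep i = (SOME j. j \<in> I \<and> d i j = 0)" for i
  have "rep i \<in> I \<and> d i (rep i) = 0" if "i \<in> I" for i
    unfolding rep_def by (rule someI[of _ i]) (use that refl in auto)
  moreover have "rep i = rep k" if ik: "i \<in> I" "k \<in> I" "d i k = 0" for i k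
  proof -
    have "j \<in> I \<and> d i j = 0 \<longleftrightarrow> j \<in> I \<and> d k j = 0" for j
    proof (cases "j \<in> I")
      case True
      then show ?thesis using ik tri[of k i j] tri[of i k j] sym[of i k] nonneg[of i j] nonneg[of k j]
        by auto
    qed simp
    then show ?thesis unfolding rep_def by simp
  qed
  ultimately show ?thesis by blast
qed

text \<open>Universality for finite pseudometrics: embed the metric quotient, realized on the set
  of representatives.\<close>
lemma embed_finite_pseudometric:
  fixes d :: "'b \<Rightarrow> 'b \<Rightarrow> real"
  assumes U: "urysohn_space TYPE('a::metric_space)" and fin: "finite I"
    and nonneg: "\<And>i j. i \<in> I \<Longrightarrow> j \<in> I \<Longrightarrow> d i j \<ge> 0"
    and refl: "\<And>i. i \<in> I \<Longrightarrow> d i i = 0"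
    and sym: "\<And>i j. i \<in> I \<Longrightarrow> j \<in> I \<Longrightarrow> d i j = d j i"
    and tri: "\<And>i j k. i \<in> I \<Longrightarrow> j \<in> I \<Longrightarrow> k \<in> I \<Longrightarrow> d i k \<le> d i j + d j k"
  shows "\<exists>e :: 'b \<Rightarrow> 'a. \<forall>i\<in>I. \<forall>j\<in>I. dist (e i) (e j) = d i j"
proof -
  have "\<exists>rep. (\<forall>i\<in>I. rep i \<in> I \<and> d i (rep i) = 0) \<and>
              (\<forall>i\<in>I. \<forall>k\<in>I. d i k = 0 \<longrightarrow> rep i = rep k)"
    by (rule pseudometric_representatives) (fact nonneg refl sym tri)+
  then obtain rep where rep: "\<And>i. i \<in> I \<Longrightarrow> rep i \<in> I \<and> d i (rep i) = 0"
    and rep_eq: "\<And>i k. i \<in> I \<Longrightarrow> k \<in> I \<Longrightarrow> d i k = 0 \<Longrightarrow> rep i = rep k"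
    by blast
  have d_rep: "d (rep i) (rep j) = d i j" if ij: "i \<in> I" "j \<in> I" for i j
  proof -
    have r: "rep i \<in> I" "rep j \<in> I" "d i (rep i) = 0" "d j (rep j) = 0" using rep ij by auto
    moreover have "d (rep i) i = 0" "d (rep j) j = 0" using r sym ij by auto
    moreover have "d (rep i) (rep j) \<le> d (rep i) i + d i (rep j)"
      and "d i (rep j) \<le> d i j + d j (rep j)"
      and "d i j \<le> d i (rep i) + d (rep i) j"
      and "d (rep i) j \<le> d (rep i) (rep j) + d (rep j) j"
      using tri r ij by blast+
    ultimately show ?thesis by linarith
  qed
  define R where "R = rep ` I"
  have RI: "R \<subseteq> I" unfolding R_def using rep by blast
  have rep_R: "rep r = r" if "r \<in> R" for r
  proof -
    obtain i where i: "i \<in> I" "r = rep i" using \<open>r \<in> R\<close> unfolding R_def by blast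
    then show ?thesis using rep_eq[of i "rep i"] rep[OF i(1)] by simp
  qed
  have "\<exists>e :: 'b \<Rightarrow> 'a. \<forall>i\<in>R. \<forall>j\<in>R. dist (e i) (e j) = d i j"
  proof (rule embed_finite_metric[OF U])
    show "finite R" using fin R_def by simp
    fix i j k assume ijk: "i \<in> R" "j \<in> R" "k \<in> R"
    then have "i \<in> I" "j \<in> I" "k \<in> I" using RI by auto
    then show "d i j \<ge> 0" "d i j = d j i" "d i k \<le> d i j + d j k"
      using nonneg sym tri by auto
    show "d i j = 0 \<longleftrightarrow> i = j"
      using rep_eq[OF \<open>i \<in> I\<close> \<open>j \<in> I\<close>] rep_R ijk refl[OF \<open>i \<in> I\<close>] by metis
  qed
  then obtain e :: "'b \<Rightarrow> 'a" where e: "\<forall>i\<in>R. \<forall>j\<in>R. dist (e i) (e j) = d i j" by blast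
  show ?thesis
  proof (intro exI ballI)
    fix i j assume "i \<in> I" "j \<in> I"
    then show "dist ((e \<circ> rep) i) ((e \<circ> rep) j) = d i j"
      using e d_rep unfolding R_def by simp
  qed
qed

lemma extend_partial_isometry:
  fixes f g :: "'b \<Rightarrow> 'a::metric_space"
  assumes U: "urysohn_space TYPE('a)" and fin: "finite I"
    and same_dist: "\<And>i j. i \<in> I \<Longrightarrow> j \<in> I \<Longrightarrow> dist (g i) (g j) = dist (f i) (f j)"
  shows "\<exists>h. isometry h \<and> (\<forall>i\<in>I. h (f i) = g i)"
proof -
  define g' where "g' x = g (SOME i. i \<in> I \<and> f i = x)" for x
  have g': "g' (f i) = g i" if "i \<in> I" for i
  proof -
    let ?j = "SOME j. j \<in> I \<and> f j = f i"
    have "\<exists>j. j \<in> I \<and> f j = f i" using that by blast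
    then have "?j \<in> I \<and> f ?j = f i" by (rule someI_ex)
    then have "dist (g ?j) (g i) = 0" using same_dist[of ?j i] that by simp
    then show ?thesis unfolding g'_def by simp
  qed
  have "\<forall>x\<in>f ` I. \<forall>y\<in>f ` I. dist (g' x) (g' y) = dist x y"
    using g' same_dist by auto
  then obtain h where "isometry h" "\<forall>x\<in>f ` I. h x = g' x"
    using urysohn_homogeneous[OF U finite_imageI[OF fin]] by blast
  then show ?thesis using g' by auto
qed

lemma move_points_fixing:
  fixes y y' :: "'c \<Rightarrow> 'a::metric_space"
  assumes U: "urysohn_space TYPE('a)" and "finite D" and "finite C"
    and mutual: "\<And>c c'. c \<in> C \<Longrightarrow> c' \<in> C \<Longrightarrow> dist (y' c) (y' c') = dist (y c) (y c')"
    and to_D: "\<And>c d. c \<in> C \<Longrightarrow> d \<in> D \<Longrightarrow> dist (y' c) d = dist (y c) d"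
  shows "\<exists>h\<in>Iso_fix D. \<forall>c\<in>C. h (y c) = y' c"
proof -
  define I where "I = Inl ` D \<union> Inr ` C"
  have "finite I" using assms(2,3) I_def by simp
  moreover have "dist (case_sum id y' i) (case_sum id y' j) = dist (case_sum id y i) (case_sum id y j)"
    if "i \<in> I" "j \<in> I" for i j
    using that mutual to_D unfolding I_def by (auto simp: dist_commute)
  ultimately obtain h where h: "isometry h" "\<forall>i\<in>I. h (case_sum id y i) = case_sum id y' i"
    using extend_partial_isometry[OF U, where f = "case_sum id y" and g = "case_sum id y'"] by blast
  have "h d = d" if "d \<in> D" for d
    using h(2)[rule_format, of "Inl d"] that unfolding I_def by simp
  then have "h \<in> Iso_fix D" using h(1) unfolding Iso_fix_def by simp
  moreover have "h (y c) = y' c" if "c \<in> C" for c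
    using h(2)[rule_format, of "Inr c"] that unfolding I_def by simp
  ultimately show ?thesis by blast
qed

section \<open>Capped Katetov extensions\<close>

text \<open>\<open>katetov_ext M K u\<close> is the largest \<open>1\<close>-Lipschitz function bounded by \<open>M\<close> and by \<open>u\<close> on \<open>K\<close>:
  \<open>z \<mapsto> min M (MIN k\<in>K. u k + dist k z)\<close>. For \<open>u = dist x\<close> it describes the point that agrees with \<open>x\<close>
  on \<open>K\<close> and is otherwise as far away as allowed.\<close>
definition katetov_ext :: "real \<Rightarrow> 'a set \<Rightarrow> ('a \<Rightarrow> real) \<Rightarrow> 'a::metric_space \<Rightarrow> real" where
  "katetov_ext M K u z = Min (insert M ((\<lambda>k. u k + dist k z) ` K))"

lemma katetov_ext_le_cap: "finite K \<Longrightarrow> katetov_ext M K u z \<le> M"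
  unfolding katetov_ext_def by simp

lemma katetov_ext_le: "finite K \<Longrightarrow> k \<in> K \<Longrightarrow> katetov_ext M K u z \<le> u k + dist k z"
  unfolding katetov_ext_def by simp

lemma katetov_ext_greatest:
  "finite K \<Longrightarrow> L \<le> M \<Longrightarrow> (\<And>k. k \<in> K \<Longrightarrow> L \<le> u k + dist k z) \<Longrightarrow> L \<le> katetov_ext M K u z"
  unfolding katetov_ext_def by simp

lemma katetov_ext_cong: "(\<And>k. k \<in> K \<Longrightarrow> u k = v k) \<Longrightarrow> katetov_ext M K u z = katetov_ext M K v z"
  unfolding katetov_ext_def by simp

lemma katetov_ext_lipschitz:
  assumes "finite K"
  shows "katetov_ext M K u z \<le> katetov_ext M K u z' + dist z z'"
proof -
  have "katetov_ext M K u z - dist z z' \<le> katetov_ext M K u z'"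
  proof (rule katetov_ext_greatest[OF assms])
    show "katetov_ext M K u z - dist z z' \<le> M"
      using katetov_ext_le_cap[OF assms, of M u z] zero_le_dist[of z z'] by linarith
    fix k assume "k \<in> K"
    then show "katetov_ext M K u z - dist z z' \<le> u k + dist k z'"
      using katetov_ext_le[OF assms, of k M u z] dist_triangle[of k z z'] dist_commute[of z z']
      by linarith
  qed
  then show ?thesis by simp
qed

lemma katetov_ext_shift:
  assumes "finite K" and "0 \<le> e" and "\<And>k. k \<in> K \<Longrightarrow> u k \<le> v k + e"
  shows "katetov_ext M K u z \<le> katetov_ext M K v z + e"
proof -
  have "katetov_ext M K u z - e \<le> katetov_ext M K v z"
  proof (rule katetov_ext_greatest[OF assms(1)])
    show "katetov_ext M K u z - e \<le> M"
      using katetov_ext_le_cap[OF assms(1), of M u z] assms(2) by linarith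
    fix k assume "k \<in> K"
    then show "katetov_ext M K u z - e \<le> v k + dist k z"
      using katetov_ext_le[OF assms(1), of k M u z] assms(3)[of k] by linarith
  qed
  then show ?thesis by simp
qed

lemma katetov_ext_dist_lower:
  assumes "finite K"
  shows "min M (dist x z) \<le> katetov_ext M K (dist x) z"
  using assms by (rule katetov_ext_greatest) (auto intro: min.coboundedI2 dist_triangle)

lemma katetov_ext_dist_at:
  assumes "finite K" and "k \<in> K" and "dist x k \<le> M"
  shows "katetov_ext M K (dist x) k = dist x k"
  using katetov_ext_le[OF assms(1,2), of M "dist x" k] katetov_ext_dist_lower[OF assms(1), of M x k] assms(3)
  by simp

text \<open>The distance on \<open>S \<uplus> C\<close> obtained by adding new points \<open>c \<in> C\<close> with mutual distances \<open>w\<close>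
  and distances \<open>H c\<close> to the old points \<open>S\<close>.\<close>
definition glued_dist :: "('c \<Rightarrow> 'a \<Rightarrow> real) \<Rightarrow> ('c \<Rightarrow> 'c \<Rightarrow> real) \<Rightarrow> 'a::metric_space + 'c \<Rightarrow> 'a + 'c \<Rightarrow> real" where
  "glued_dist H w x z =
     (case (x, z) of (Inl s, Inl s') \<Rightarrow> dist s s' | (Inl s, Inr c) \<Rightarrow> H c s
                   | (Inr c, Inl s) \<Rightarrow> H c s | (Inr c, Inr c') \<Rightarrow> w c c')"

lemma glued_dist_triangle:
  fixes S :: "'a::metric_space set" and C :: "'c set"
  assumes ijk: "i \<in> Inl ` S \<union> Inr ` C" "j \<in> Inl ` S \<union> Inr ` C" "k \<in> Inl ` S \<union> Inr ` C"
    and wsym: "\<And>c c'. c \<in> C \<Longrightarrow> c' \<in> C \<Longrightarrow> w c c' = w c' c"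
    and wtri: "\<And>c c' c''. c \<in> C \<Longrightarrow> c' \<in> C \<Longrightarrow> c'' \<in> C \<Longrightarrow> w c c'' \<le> w c c' + w c' c''"
    and t1: "\<And>c s s'. c \<in> C \<Longrightarrow> s \<in> S \<Longrightarrow> s' \<in> S \<Longrightarrow> dist s s' \<le> H c s + H c s'"
    and t2: "\<And>c s s'. c \<in> C \<Longrightarrow> s \<in> S \<Longrightarrow> s' \<in> S \<Longrightarrow> H c s \<le> dist s s' + H c s'"
    and t3: "\<And>c c' s. c \<in> C \<Longrightarrow> c' \<in> C \<Longrightarrow> s \<in> S \<Longrightarrow> w c c' \<le> H c s + H c' s"
    and t4: "\<And>c c' s. c \<in> C \<Longrightarrow> c' \<in> C \<Longrightarrow> s \<in> S \<Longrightarrow> H c s \<le> w c c' + H c' s"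
  shows "glued_dist H w i k \<le> glued_dist H w i j + glued_dist H w j k"
proof -
  consider (LLL) s1 s2 s3 where "i = Inl s1" "j = Inl s2" "k = Inl s3" "s1\<in>S" "s2\<in>S" "s3\<in>S"
    | (LLR) s1 s2 c3 where "i = Inl s1" "j = Inl s2" "k = Inr c3" "s1\<in>S" "s2\<in>S" "c3\<in>C"
    | (LRL) s1 c2 s3 where "i = Inl s1" "j = Inr c2" "k = Inl s3" "s1\<in>S" "c2\<in>C" "s3\<in>S"
    | (LRR) s1 c2 c3 where "i = Inl s1" "j = Inr c2" "k = Inr c3" "s1\<in>S" "c2\<in>C" "c3\<in>C"
    | (RLL) c1 s2 s3 where "i = Inr c1" "j = Inl s2" "k = Inl s3" "c1\<in>C" "s2\<in>S" "s3\<in>S"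
    | (RLR) c1 s2 c3 where "i = Inr c1" "j = Inl s2" "k = Inr c3" "c1\<in>C" "s2\<in>S" "c3\<in>C"
    | (RRL) c1 c2 s3 where "i = Inr c1" "j = Inr c2" "k = Inl s3" "c1\<in>C" "c2\<in>C" "s3\<in>S"
    | (RRR) c1 c2 c3 where "i = Inr c1" "j = Inr c2" "k = Inr c3" "c1\<in>C" "c2\<in>C" "c3\<in>C"
    using ijk by (elim UnE imageE) blast+
  then show ?thesis
  proof cases
    case LLL then show ?thesis by (simp add: glued_dist_def dist_triangle)
  next
    case LLR then show ?thesis using t2[of c3 s1 s2] by (simp add: glued_dist_def)
  next
    case LRL then show ?thesis using t1[of c2 s1 s3] by (simp add: glued_dist_def)
  next
    case LRR then show ?thesis using t4[of c3 c2 s1] wsym[of c2 c3] by (simp add: glued_dist_def)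
  next
    case RLL then show ?thesis using t2[of c1 s3 s2] dist_commute[of s2 s3] by (simp add: glued_dist_def)
  next
    case RLR then show ?thesis using t3[of c1 c3 s2] by (simp add: glued_dist_def)
  next
    case RRL then show ?thesis using t4[of c1 c2 s3] by (simp add: glued_dist_def)
  next
    case RRR then show ?thesis using wtri[of c1 c2 c3] by (simp add: glued_dist_def)
  qed
qed

text \<open>Extension property of the Urysohn space: finitely many new points with prescribed mutual
  distances \<open>w\<close> and distances \<open>H c\<close> to a finite set \<open>S\<close> exist, provided the glued distance is a
  pseudometric. (Embed it, then move the copy of \<open>S\<close> back onto \<open>S\<close>.)\<close>
lemma realize_points:
  fixes S :: "'a::metric_space set" and C :: "'c set"
  assumes U: "urysohn_space TYPE('a)" and "finite S" and "finite C"
    and w0: "\<And>c. c \<in> C \<Longrightarrow> w c c = 0"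
    and wnn: "\<And>c c'. c \<in> C \<Longrightarrow> c' \<in> C \<Longrightarrow> w c c' \<ge> 0"
    and wsym: "\<And>c c'. c \<in> C \<Longrightarrow> c' \<in> C \<Longrightarrow> w c c' = w c' c"
    and wtri: "\<And>c c' c''. c \<in> C \<Longrightarrow> c' \<in> C \<Longrightarrow> c'' \<in> C \<Longrightarrow> w c c'' \<le> w c c' + w c' c''"
    and Hnn: "\<And>c s. c \<in> C \<Longrightarrow> s \<in> S \<Longrightarrow> H c s \<ge> 0"
    and t1: "\<And>c s s'. c \<in> C \<Longrightarrow> s \<in> S \<Longrightarrow> s' \<in> S \<Longrightarrow> dist s s' \<le> H c s + H c s'"
    and t2: "\<And>c s s'. c \<in> C \<Longrightarrow> s \<in> S \<Longrightarrow> s' \<in> S \<Longrightarrow> H c s \<le> dist s s' + H c s'"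
    and t3: "\<And>c c' s. c \<in> C \<Longrightarrow> c' \<in> C \<Longrightarrow> s \<in> S \<Longrightarrow> w c c' \<le> H c s + H c' s"
    and t4: "\<And>c c' s. c \<in> C \<Longrightarrow> c' \<in> C \<Longrightarrow> s \<in> S \<Longrightarrow> H c s \<le> w c c' + H c' s"
  shows "\<exists>y. \<forall>c\<in>C. (\<forall>c'\<in>C. dist (y c) (y c') = w c c') \<and> (\<forall>s\<in>S. dist (y c) s = H c s)"
proof -
  define I where "I = Inl ` S \<union> Inr ` C"
  let ?d = "glued_dist H w"
  have "finite I" using assms(2,3) I_def by simp
  moreover have "?d i j \<ge> 0" if "i \<in> I" "j \<in> I" for i j
    using that unfolding I_def glued_dist_def by (elim UnE imageE) (auto simp: Hnn wnn)
  moreover have "?d i j = ?d j i" if "i \<in> I" "j \<in> I" for i j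
    using that unfolding I_def glued_dist_def by (elim UnE imageE) (auto simp: dist_commute wsym)
  moreover have "?d i i = 0" if "i \<in> I" for i
    using that unfolding I_def glued_dist_def by (elim UnE imageE) (auto simp: w0)
  moreover have "?d i k \<le> ?d i j + ?d j k" if "i \<in> I" "j \<in> I" "k \<in> I" for i j k
    using that unfolding I_def by (rule glued_dist_triangle) (fact wsym wtri t1 t2 t3 t4)+
  ultimately obtain e :: "'a + 'c \<Rightarrow> 'a" where e: "\<forall>i\<in>I. \<forall>j\<in>I. dist (e i) (e j) = ?d i j"
    using embed_finite_pseudometric[OF U, of I ?d] by blast
  obtain \<phi> where \<phi>: "isometry \<phi>" "\<forall>s\<in>S. \<phi> (e (Inl s)) = s"
    using extend_partial_isometry[OF U \<open>finite S\<close>, where f = "\<lambda>s. e (Inl s)" and g = "\<lambda>s. s"] e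
    unfolding I_def glued_dist_def by auto
  show ?thesis
  proof (intro exI[of _ "\<lambda>c. \<phi> (e (Inr c))"] ballI conjI)
    fix c c' assume "c \<in> C" "c' \<in> C"
    then show "dist (\<phi> (e (Inr c))) (\<phi> (e (Inr c'))) = w c c'"
      using isometry_dist[OF \<phi>(1)] e unfolding I_def glued_dist_def by auto
  next
    fix c s assume "c \<in> C" "s \<in> S"
    then show "dist (\<phi> (e (Inr c))) s = H c s"
      using isometry_dist[OF \<phi>(1), of "e (Inr c)" "e (Inl s)"] \<phi>(2) e
      unfolding I_def glued_dist_def by auto
  qed
qed

lemma realize_katetov_profiles:
  fixes y :: "'c \<Rightarrow> 'a::metric_space"
  assumes U: "urysohn_space TYPE('a)" and fB: "finite B" and "finite S" and "finite C"
    and mutual_M: "\<And>c c'. c \<in> C \<Longrightarrow> c' \<in> C \<Longrightarrow> dist (y c) (y c') \<le> M"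
    and set_M: "\<And>s s'. s \<in> S \<Longrightarrow> s' \<in> S \<Longrightarrow> dist s s' \<le> M"
  shows "\<exists>y'. \<forall>c\<in>C. (\<forall>c'\<in>C. dist (y' c) (y' c') = dist (y c) (y c')) \<and>
                     (\<forall>s\<in>S. dist (y' c) s = katetov_ext M B (dist (y c)) s)"
proof (rule realize_points[OF U \<open>finite S\<close> \<open>finite C\<close>])
  let ?H = "\<lambda>c. katetov_ext M B (dist (y c))"
  have lower: "min M (dist (y c) s) \<le> ?H c s" for c s
    using katetov_ext_dist_lower[OF fB] .
  show Hnn: "0 \<le> ?H c s" if "s \<in> S" for c s
    using set_M[OF that that] by (intro katetov_ext_greatest[OF fB]) auto
  show "dist s s' \<le> ?H c s + ?H c s'" if "c \<in> C" "s \<in> S" "s' \<in> S" for c s s'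
    using lower[of c s] lower[of c s'] Hnn[OF that(2), of c] Hnn[OF that(3), of c] set_M[OF that(2,3)]
      dist_triangle[of s s' "y c"] dist_commute[of s "y c"]
    unfolding min_def by (auto split: if_splits)
  show "?H c s \<le> dist s s' + ?H c s'" for c s s'
    using katetov_ext_lipschitz[OF fB] by (simp add: add.commute)
  show "dist (y c) (y c') \<le> ?H c s + ?H c' s" if "c \<in> C" "c' \<in> C" "s \<in> S" for c c' s
    using lower[of c s] lower[of c' s] Hnn[OF that(3), of c] Hnn[OF that(3), of c'] mutual_M[OF that(1,2)]
      dist_triangle[of "y c" "y c'" s] dist_commute[of s "y c'"]
    unfolding min_def by (auto split: if_splits)
  show "?H c s \<le> dist (y c) (y c') + ?H c' s" for c c' s
  proof -
    have "?H c s \<le> ?H c' s + dist (y c) (y c')"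
    proof (rule katetov_ext_shift[OF fB zero_le_dist])
      show "dist (y c) k \<le> dist (y c') k + dist (y c) (y c')" for k
        using dist_triangle[of "y c" k "y c'"] by simp
    qed
    then show ?thesis by simp
  qed
qed (auto simp: dist_commute intro: dist_triangle)

lemma push_away_from:
  fixes y :: "'c \<Rightarrow> 'a::metric_space"
  assumes U: "urysohn_space TYPE('a)" and fB: "finite B" and fS: "finite S" and fC: "finite C"
    and "B \<subseteq> S"
    and mutual_M: "\<And>c c'. c \<in> C \<Longrightarrow> c' \<in> C \<Longrightarrow> dist (y c) (y c') \<le> M"
    and set_M: "\<And>s s'. s \<in> S \<Longrightarrow> s' \<in> S \<Longrightarrow> dist s s' \<le> M"
    and point_M: "\<And>c b. c \<in> C \<Longrightarrow> b \<in> B \<Longrightarrow> dist (y c) b \<le> M"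
  shows "\<exists>g\<in>Iso_fix B. \<forall>c\<in>C. \<forall>s\<in>S. dist (g (y c)) s = katetov_ext M B (dist (y c)) s"
proof -
  have "\<exists>y'. \<forall>c\<in>C. (\<forall>c'\<in>C. dist (y' c) (y' c') = dist (y c) (y c')) \<and>
                     (\<forall>s\<in>S. dist (y' c) s = katetov_ext M B (dist (y c)) s)"
    by (rule realize_katetov_profiles[OF U fB fS fC]) (fact mutual_M set_M)+
  then obtain y' where mutual: "\<forall>c\<in>C. \<forall>c'\<in>C. dist (y' c) (y' c') = dist (y c) (y c')"
    and profile: "\<forall>c\<in>C. \<forall>s\<in>S. dist (y' c) s = katetov_ext M B (dist (y c)) s"
    by blast
  have "\<forall>c\<in>C. \<forall>b\<in>B. dist (y' c) b = dist (y c) b"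
  proof (intro ballI)
    fix c b assume "c \<in> C" "b \<in> B"
    then show "dist (y' c) b = dist (y c) b"
      using profile katetov_ext_dist_at[OF fB \<open>b \<in> B\<close> point_M] \<open>B \<subseteq> S\<close> by auto
  qed
  then have "\<exists>g\<in>Iso_fix B. \<forall>c\<in>C. g (y c) = y' c"
    using mutual by (intro move_points_fixing[OF U fB fC]) auto
  then obtain g where "g \<in> Iso_fix B" "\<forall>c\<in>C. g (y c) = y' c" ..
  then show ?thesis using profile by (intro bexI[of _ g]) auto
qed

section \<open>Alternating pushes\<close>

lemma push_step:
  fixes y :: "'c \<Rightarrow> 'a::metric_space" and F :: "'c \<Rightarrow> 'a \<Rightarrow> real"
  assumes U: "urysohn_space TYPE('a)" and fA: "finite A" and fB: "finite B" and fC: "finite C"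
    and sep: "\<And>a b. a \<in> A - B \<Longrightarrow> b \<in> B - A \<Longrightarrow> \<delta> \<le> dist a b"
    and F_cap: "\<And>c z. c \<in> C \<Longrightarrow> F c z \<le> M"
    and F_lip: "\<And>c z z'. c \<in> C \<Longrightarrow> F c z \<le> F c z' + dist z z'"
    and F_common: "\<And>c d. c \<in> C \<Longrightarrow> d \<in> A \<inter> B \<Longrightarrow> F c d \<le> dist (y c) d"
    and mutual_M: "\<And>c c'. c \<in> C \<Longrightarrow> c' \<in> C \<Longrightarrow> dist (y c) (y c') \<le> M"
    and set_M: "\<And>z z'. z \<in> A \<union> B \<Longrightarrow> z' \<in> A \<union> B \<Longrightarrow> dist z z' \<le> M"
    and point_M: "\<And>c b. c \<in> C \<Longrightarrow> b \<in> B \<Longrightarrow> dist (y c) b \<le> M"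
    and lower: "\<And>c b. c \<in> C \<Longrightarrow> b \<in> B \<Longrightarrow> min (F c b) t \<le> dist (y c) b"
  shows "\<exists>g\<in>Iso_fix B. \<forall>c\<in>C. (\<forall>z\<in>A \<union> B. dist (g (y c)) z \<le> M) \<and>
                              (\<forall>a\<in>A. min (F c a) (t + \<delta>) \<le> dist (g (y c)) a)"
proof -
  have "\<exists>g\<in>Iso_fix B. \<forall>c\<in>C. \<forall>s\<in>A \<union> B. dist (g (y c)) s = katetov_ext M B (dist (y c)) s"
    by (rule push_away_from[OF U fB _ fC]) (simp add: fA fB, blast, (fact mutual_M set_M point_M)+)
  then obtain g where g: "g \<in> Iso_fix B"
    and profile: "\<forall>c\<in>C. \<forall>s\<in>A \<union> B. dist (g (y c)) s = katetov_ext M B (dist (y c)) s" ..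
  have "min (F c a) (t + \<delta>) \<le> katetov_ext M B (dist (y c)) a" if c: "c \<in> C" and a: "a \<in> A" for c a
  proof (rule katetov_ext_greatest[OF fB])
    show "min (F c a) (t + \<delta>) \<le> M" using F_cap[OF c] by (simp add: min.coboundedI1)
    fix b assume "b \<in> B"
    have lip: "F c a \<le> F c b + dist b a" using F_lip[OF c, of a b] by (simp add: dist_commute)
    consider "b \<in> A" | "a \<in> B" | "a \<in> A - B" "b \<in> B - A" using a \<open>b \<in> B\<close> by blast
    then show "min (F c a) (t + \<delta>) \<le> dist (y c) b + dist b a"
    proof cases
      case 1
      then show ?thesis using lip F_common[OF c, of b] \<open>b \<in> B\<close> by (simp add: min.coboundedI1)
    next
      case 2
      then have "F c a \<le> dist (y c) a" using F_common[OF c, of a] a by simp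
      then show ?thesis using dist_triangle[of "y c" a b] by (simp add: min.coboundedI1)
    next
      case 3
      then have "\<delta> \<le> dist b a" using sep by (simp add: dist_commute)
      then show ?thesis using lip lower[OF c \<open>b \<in> B\<close>] by (auto simp: min_def split: if_splits)
    qed
  qed
  moreover have "katetov_ext M B (dist (y c)) z \<le> M" for c z using katetov_ext_le_cap[OF fB] .
  ultimately show ?thesis using g profile by (intro bexI[of _ g]) auto
qed

lemma push_step_swapped:
  fixes y :: "'c \<Rightarrow> 'a::metric_space" and F :: "'c \<Rightarrow> 'a \<Rightarrow> real"
  assumes U: "urysohn_space TYPE('a)" and fA: "finite A" and fB: "finite B" and fC: "finite C"
    and sep: "\<And>a b. a \<in> A - B \<Longrightarrow> b \<in> B - A \<Longrightarrow> \<delta> \<le> dist a b"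
    and F_cap: "\<And>c z. c \<in> C \<Longrightarrow> F c z \<le> M"
    and F_lip: "\<And>c z z'. c \<in> C \<Longrightarrow> F c z \<le> F c z' + dist z z'"
    and F_common: "\<And>c d. c \<in> C \<Longrightarrow> d \<in> A \<inter> B \<Longrightarrow> F c d \<le> dist (y c) d"
    and mutual_M: "\<And>c c'. c \<in> C \<Longrightarrow> c' \<in> C \<Longrightarrow> dist (y c) (y c') \<le> M"
    and set_M: "\<And>z z'. z \<in> A \<union> B \<Longrightarrow> z' \<in> A \<union> B \<Longrightarrow> dist z z' \<le> M"
    and point_M: "\<And>c a. c \<in> C \<Longrightarrow> a \<in> A \<Longrightarrow> dist (y c) a \<le> M"
    and lower: "\<And>c a. c \<in> C \<Longrightarrow> a \<in> A \<Longrightarrow> min (F c a) t \<le> dist (y c) a"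
  shows "\<exists>g\<in>Iso_fix A. \<forall>c\<in>C. (\<forall>z\<in>A \<union> B. dist (g (y c)) z \<le> M) \<and>
                              (\<forall>b\<in>B. min (F c b) (t + \<delta>) \<le> dist (g (y c)) b)"
proof -
  have "\<exists>g\<in>Iso_fix A. \<forall>c\<in>C. (\<forall>z\<in>B \<union> A. dist (g (y c)) z \<le> M) \<and>
                              (\<forall>b\<in>B. min (F c b) (t + \<delta>) \<le> dist (g (y c)) b)"
  proof (rule push_step[OF U fB fA fC])
    show "\<delta> \<le> dist b a" if "b \<in> B - A" "a \<in> A - B" for a b
      using sep[OF that(2,1)] by (simp add: dist_commute)
    show "F c d \<le> dist (y c) d" if "c \<in> C" "d \<in> B \<inter> A" for c d
      using F_common[of c d] that by blast
    show "dist z z' \<le> M" if "z \<in> B \<union> A" "z' \<in> B \<union> A" for z z'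
      using set_M[of z z'] that by blast
  qed (fact F_cap F_lip mutual_M point_M lower)+
  then show ?thesis by (simp add: Un_commute)
qed

lemma push_round:
  fixes y :: "'c \<Rightarrow> 'a::metric_space" and F :: "'c \<Rightarrow> 'a \<Rightarrow> real"
  assumes U: "urysohn_space TYPE('a)" and fA: "finite A" and fB: "finite B" and fC: "finite C"
    and "0 \<le> \<delta>"
    and sep: "\<And>a b. a \<in> A - B \<Longrightarrow> b \<in> B - A \<Longrightarrow> \<delta> \<le> dist a b"
    and F_cap: "\<And>c z. c \<in> C \<Longrightarrow> F c z \<le> M"
    and F_lip: "\<And>c z z'. c \<in> C \<Longrightarrow> F c z \<le> F c z' + dist z z'"
    and F_common: "\<And>c d. c \<in> C \<Longrightarrow> d \<in> A \<inter> B \<Longrightarrow> F c d \<le> dist (y c) d"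
    and mutual_M: "\<And>c c'. c \<in> C \<Longrightarrow> c' \<in> C \<Longrightarrow> dist (y c) (y c') \<le> M"
    and set_M: "\<And>z z'. z \<in> A \<union> B \<Longrightarrow> z' \<in> A \<union> B \<Longrightarrow> dist z z' \<le> M"
    and point_M: "\<And>c z. c \<in> C \<Longrightarrow> z \<in> A \<union> B \<Longrightarrow> dist (y c) z \<le> M"
    and lower: "\<And>c b. c \<in> C \<Longrightarrow> b \<in> B \<Longrightarrow> min (F c b) t \<le> dist (y c) b"
  shows "\<exists>g\<in>gen_group (Iso_fix A \<union> Iso_fix B). \<forall>c\<in>C. \<forall>z\<in>A \<union> B.
           dist (g (y c)) z \<le> M \<and> min (F c z) (t + \<delta>) \<le> dist (g (y c)) z"
proof -
  have "\<exists>g\<in>Iso_fix B. \<forall>c\<in>C. (\<forall>z\<in>A \<union> B. dist (g (y c)) z \<le> M) \<and>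
                              (\<forall>a\<in>A. min (F c a) (t + \<delta>) \<le> dist (g (y c)) a)"
    by (rule push_step[OF U fA fB fC])
      (fact sep F_cap F_lip F_common mutual_M set_M lower | simp add: point_M)+
  then obtain g1 where g1: "g1 \<in> Iso_fix B"
    and g1_M: "\<forall>c\<in>C. \<forall>z\<in>A \<union> B. dist (g1 (y c)) z \<le> M"
    and g1_A: "\<forall>c\<in>C. \<forall>a\<in>A. min (F c a) (t + \<delta>) \<le> dist (g1 (y c)) a"
    by blast
  define y1 where "y1 c = g1 (y c)" for c
  have "\<exists>g\<in>Iso_fix A. \<forall>c\<in>C. (\<forall>z\<in>A \<union> B. dist (g (y1 c)) z \<le> M) \<and>
                              (\<forall>b\<in>B. min (F c b) (t + \<delta>) \<le> dist (g (y1 c)) b)"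
  proof (rule push_step_swapped[OF U fA fB fC])
    show "F c d \<le> dist (y1 c) d" if "c \<in> C" "d \<in> A \<inter> B" for c d
      using F_common[OF that] Iso_fix_dist[OF g1, of d "y c"] that unfolding y1_def by simp
    show "dist (y1 c) (y1 c') \<le> M" if "c \<in> C" "c' \<in> C" for c c'
      using mutual_M[OF that] g1 unfolding y1_def Iso_fix_def by (auto simp: isometry_dist)
    show "min (F c a) t \<le> dist (y1 c) a" if "c \<in> C" "a \<in> A" for c a
      using g1_A that \<open>0 \<le> \<delta>\<close> unfolding y1_def by fastforce
  qed (use sep F_cap F_lip set_M g1_M y1_def in auto)
  then obtain g2 where g2: "g2 \<in> Iso_fix A"
    and g2_M: "\<forall>c\<in>C. \<forall>z\<in>A \<union> B. dist (g2 (y1 c)) z \<le> M"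
    and g2_B: "\<forall>c\<in>C. \<forall>b\<in>B. min (F c b) (t + \<delta>) \<le> dist (g2 (y1 c)) b"
    by blast
  show ?thesis
  proof (intro bexI[of _ "g2 \<circ> g1"] ballI conjI)
    show "g2 \<circ> g1 \<in> gen_group (Iso_fix A \<union> Iso_fix B)"
      using g1 g2 by (intro gen_group.gen_comp gen_group.gen_in) auto
    fix c z assume cz: "c \<in> C" "z \<in> A \<union> B"
    then show "dist ((g2 \<circ> g1) (y c)) z \<le> M" using g2_M unfolding y1_def by auto
    show "min (F c z) (t + \<delta>) \<le> dist ((g2 \<circ> g1) (y c)) z"
    proof (cases "z \<in> A")
      case True
      then show ?thesis using g1_A Iso_fix_dist[OF g2 True] cz unfolding y1_def by simp
    next
      case False
      then show ?thesis using g2_B cz unfolding y1_def by simp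
    qed
  qed
qed

lemma alternating_pushes:
  fixes x :: "'c \<Rightarrow> 'a::metric_space" and F :: "'c \<Rightarrow> 'a \<Rightarrow> real"
  assumes U: "urysohn_space TYPE('a)" and fA: "finite A" and fB: "finite B" and fC: "finite C"
    and "0 \<le> \<delta>"
    and sep: "\<And>a b. a \<in> A - B \<Longrightarrow> b \<in> B - A \<Longrightarrow> \<delta> \<le> dist a b"
    and F_cap: "\<And>c z. c \<in> C \<Longrightarrow> F c z \<le> M"
    and F_lip: "\<And>c z z'. c \<in> C \<Longrightarrow> F c z \<le> F c z' + dist z z'"
    and F_common: "\<And>c d. c \<in> C \<Longrightarrow> d \<in> A \<inter> B \<Longrightarrow> F c d \<le> dist (x c) d"
    and mutual_M: "\<And>c c'. c \<in> C \<Longrightarrow> c' \<in> C \<Longrightarrow> dist (x c) (x c') \<le> M"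
    and set_M: "\<And>z z'. z \<in> A \<union> B \<Longrightarrow> z' \<in> A \<union> B \<Longrightarrow> dist z z' \<le> M"
    and point_M: "\<And>c z. c \<in> C \<Longrightarrow> z \<in> A \<union> B \<Longrightarrow> dist (x c) z \<le> M"
  shows "\<exists>q\<in>gen_group (Iso_fix A \<union> Iso_fix B). \<forall>c\<in>C. \<forall>z\<in>A \<union> B.
           dist (q (x c)) z \<le> M \<and> min (F c z) (real k * \<delta>) \<le> dist (q (x c)) z"
proof (induction k)
  case 0
  show ?case
  proof (intro bexI[of _ id] ballI conjI)
    fix c z assume "c \<in> C" "z \<in> A \<union> B"
    then show "dist (id (x c)) z \<le> M" using point_M by simp
    show "min (F c z) (real 0 * \<delta>) \<le> dist (id (x c)) z" by (simp add: min.coboundedI2)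
  qed (rule gen_group.gen_id)
next
  case (Suc k)
  then obtain q where q: "q \<in> gen_group (Iso_fix A \<union> Iso_fix B)"
    and IH: "\<forall>c\<in>C. \<forall>z\<in>A \<union> B. dist (q (x c)) z \<le> M \<and> min (F c z) (real k * \<delta>) \<le> dist (q (x c)) z"
    by blast
  have q_fix: "q \<in> Iso_fix (A \<inter> B)" using gen_group_Iso_fix_common[OF q] .
  then have "isometry q" unfolding Iso_fix_def by simp
  have "\<exists>g\<in>gen_group (Iso_fix A \<union> Iso_fix B). \<forall>c\<in>C. \<forall>z\<in>A \<union> B.
           dist (g (q (x c))) z \<le> M \<and> min (F c z) (real k * \<delta> + \<delta>) \<le> dist (g (q (x c))) z"
  proof (rule push_round[OF U fA fB fC \<open>0 \<le> \<delta>\<close>])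
    show "F c d \<le> dist (q (x c)) d" if "c \<in> C" "d \<in> A \<inter> B" for c d
      using F_common[OF that] Iso_fix_dist[OF q_fix that(2)] by simp
    show "dist (q (x c)) (q (x c')) \<le> M" if "c \<in> C" "c' \<in> C" for c c'
      using mutual_M[OF that] isometry_dist[OF \<open>isometry q\<close>] by simp
  qed (use IH in \<open>auto intro: sep F_cap F_lip set_M\<close>)
  then obtain g where "g \<in> gen_group (Iso_fix A \<union> Iso_fix B)"
    and "\<forall>c\<in>C. \<forall>z\<in>A \<union> B.
           dist (g (q (x c))) z \<le> M \<and> min (F c z) (real k * \<delta> + \<delta>) \<le> dist (g (q (x c))) z"
    by blast
  then show ?case using q
    by (intro bexI[of _ "g \<circ> q"]) (auto simp: algebra_simps intro: gen_group.gen_comp)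
qed

lemma separation_constant:
  fixes A B :: "'a::metric_space set"
  assumes "finite A" and "finite B"
  shows "\<exists>\<delta>>0. \<forall>a\<in>A - B. \<forall>b\<in>B - A. \<delta> \<le> dist a b"
proof -
  let ?D = "insert 1 ((\<lambda>(a, b). dist a b) ` ((A - B) \<times> (B - A)))"
  have "finite ?D" using assms by simp
  have "0 < Min ?D" using assms by (auto simp: Min_gr_iff)
  moreover have "Min ?D \<le> dist a b" if "a \<in> A - B" "b \<in> B - A" for a b
    using \<open>finite ?D\<close> that by (intro Min_le) force+
  ultimately show ?thesis by blast
qed

text \<open>Once the lower bound \<open>T\<close> exceeds the cap, a point with the distances of \<open>v\<close> on \<open>D\<close> that lies
  above the profile of \<open>v\<close> has exactly that profile, since the profile is the largest possible one.\<close>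
lemma dist_eq_katetov_ext:
  assumes "finite D" and common: "\<And>d. d \<in> D \<Longrightarrow> dist w d = dist v d"
    and "dist w z \<le> M" and "min (katetov_ext M D (dist v) z) T \<le> dist w z" and "M \<le> T"
  shows "dist w z = katetov_ext M D (dist v) z"
proof (rule antisym)
  show "dist w z \<le> katetov_ext M D (dist v) z"
  proof (rule katetov_ext_greatest[OF assms(1,3)])
    fix d assume "d \<in> D"
    then show "dist w z \<le> dist v d + dist d z" using common dist_triangle[of w z d] by simp
  qed
  show "katetov_ext M D (dist v) z \<le> dist w z"
    using katetov_ext_le_cap[OF assms(1), of M "dist v" z] assms(4,5) by (simp add: min_def)
qed

lemma reach_katetov_profile:
  fixes x :: "'c \<Rightarrow> 'a::metric_space"
  assumes U: "urysohn_space TYPE('a)" and fA: "finite A" and fB: "finite B" and fC: "finite C"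
    and mutual_M: "\<And>c c'. c \<in> C \<Longrightarrow> c' \<in> C \<Longrightarrow> dist (x c) (x c') \<le> M"
    and set_M: "\<And>z z'. z \<in> A \<union> B \<Longrightarrow> z' \<in> A \<union> B \<Longrightarrow> dist z z' \<le> M"
    and point_M: "\<And>c z. c \<in> C \<Longrightarrow> z \<in> A \<union> B \<Longrightarrow> dist (x c) z \<le> M"
  shows "\<exists>q\<in>gen_group (Iso_fix A \<union> Iso_fix B). \<forall>c\<in>C. \<forall>z\<in>A \<union> B.
           dist (q (x c)) z = katetov_ext M (A \<inter> B) (dist (x c)) z"
proof -
  have fD: "finite (A \<inter> B)" using fA by simp
  obtain \<delta> where "\<delta> > 0" and sep: "\<forall>a\<in>A - B. \<forall>b\<in>B - A. \<delta> \<le> dist a b"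
    using separation_constant[OF fA fB] by blast
  obtain k :: nat where "M / \<delta> \<le> real k" using real_arch_simple by blast
  then have "M \<le> real k * \<delta>" using \<open>\<delta> > 0\<close> by (simp add: divide_le_eq)
  let ?F = "\<lambda>c. katetov_ext M (A \<inter> B) (dist (x c))"
  have "\<exists>q\<in>gen_group (Iso_fix A \<union> Iso_fix B). \<forall>c\<in>C. \<forall>z\<in>A \<union> B.
          dist (q (x c)) z \<le> M \<and> min (?F c z) (real k * \<delta>) \<le> dist (q (x c)) z"
  proof (rule alternating_pushes[OF U fA fB fC])
    show "?F c d \<le> dist (x c) d" if "d \<in> A \<inter> B" for c d
      using katetov_ext_le[OF fD that, of M "dist (x c)" d] by simp
  qed (use \<open>\<delta> > 0\<close> sep katetov_ext_le_cap[OF fD] katetov_ext_lipschitz[OF fD] in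
       \<open>auto intro: mutual_M set_M point_M\<close>)
  then obtain q where q: "q \<in> gen_group (Iso_fix A \<union> Iso_fix B)"
    and bounds: "\<forall>c\<in>C. \<forall>z\<in>A \<union> B. dist (q (x c)) z \<le> M \<and> min (?F c z) (real k * \<delta>) \<le> dist (q (x c)) z"
    by blast
  have "dist (q (x c)) z = ?F c z" if "c \<in> C" "z \<in> A \<union> B" for c z
    using bounds that \<open>M \<le> real k * \<delta>\<close> Iso_fix_dist[OF gen_group_Iso_fix_common[OF q]]
    by (intro dist_eq_katetov_ext[OF fD]) auto
  then show ?thesis using q by blast
qed

theorem theorem4p16:
  fixes A B C :: "'a::metric_space set"
  assumes "urysohn_space TYPE('a)"
    and "finite A" and "finite B" and "finite C"
    and "p \<in> Iso_fix (A \<inter> B)"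
  shows "\<exists>q \<in> gen_group (Iso_fix A \<union> Iso_fix B). \<forall>x\<in>C. q x = p x"
proof -
  let ?G = "gen_group (Iso_fix A \<union> Iso_fix B)"
  define M where "M = diameter (A \<union> B \<union> C \<union> p ` C)"
  let ?profile = "\<lambda>c. katetov_ext M (A \<inter> B) (dist c)"
  have bounded: "dist u v \<le> M" if "u \<in> A \<union> B \<union> C \<union> p ` C" "v \<in> A \<union> B \<union> C \<union> p ` C" for u v
    unfolding M_def using assms(2-4) that by (intro diameter_bounded_bound finite_imp_bounded) auto
  have "\<exists>q\<in>?G. \<forall>c\<in>C. \<forall>z\<in>A \<union> B. dist (q c) z = ?profile c z"
    by (rule reach_katetov_profile[OF assms(1-4), where x = "\<lambda>c. c"]) (use bounded in auto)
  then obtain q1 where q1: "q1 \<in> ?G" and q1_profile: "\<forall>c\<in>C. \<forall>z\<in>A \<union> B. dist (q1 c) z = ?profile c z" ..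
  have "\<exists>q\<in>?G. \<forall>c\<in>C. \<forall>z\<in>A \<union> B. dist (q (p c)) z = katetov_ext M (A \<inter> B) (dist (p c)) z"
    by (rule reach_katetov_profile[OF assms(1-4)]) (use bounded in auto)
  moreover have "katetov_ext M (A \<inter> B) (dist (p c)) = ?profile c" for c
    using Iso_fix_dist[OF assms(5)] by (intro ext katetov_ext_cong) auto
  ultimately obtain q2 where q2: "q2 \<in> ?G"
    and q2_profile: "\<forall>c\<in>C. \<forall>z\<in>A \<union> B. dist (q2 (p c)) z = ?profile c z" by auto
  have "isometry q1" "isometry q2" "isometry p"
    using gen_group_Iso_fix_common[OF q1] gen_group_Iso_fix_common[OF q2] assms(5)
    unfolding Iso_fix_def by auto
  then have "\<exists>s\<in>Iso_fix A. \<forall>c\<in>C. s (q1 c) = q2 (p c)"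
    using q1_profile q2_profile by (intro move_points_fixing[OF assms(1,2,4)]) (auto simp: isometry_dist)
  then obtain s where "s \<in> Iso_fix A" and "\<forall>c\<in>C. s (q1 c) = q2 (p c)" ..
  moreover have "\<forall>g\<in>Iso_fix A \<union> Iso_fix B. bij g" unfolding Iso_fix_def isometry_def by auto
  ultimately show ?thesis using gen_group_solve[of "Iso_fix A \<union> Iso_fix B" q1 q2 s C p] q1 q2 by blast
qed


end
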